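(* Let $f(t)=\sum_{n=1}^{\infty}t^{n}/n^{n}=t\int_0^1x^{-tx}\,dx$. Then $f(t)\to-1$ as $t\to-\infty$ along the real axis.
   Context: $x^{-tx}=\exp(-tx\ln x)$ for $x\in(0,1]$. *)

theory Defs
  imports "HOL-Analysis.Analysis"
begin

definition f_series :: "real \<Rightarrow> real" where
  "f_series t = (\<Sum>k. t ^ (Suc k) / (real (Suc k)) ^ (Suc k))"

end

theory Submission
  imports Defs "HOL-Real_Asymp.Real_Asymp"
begin

text \<open>
  Expanding \<open>x\<^sup>s\<^sup>x = exp (s x ln x)\<close> into its exponential series and integrating
  termwise with \<open>\<integral>\<^sub>0\<^sup>1 x\<^sup>n ln\<^sup>n x dx = (-1)\<^sup>n n! / (n+1)\<^sup>n\<^sup>+\<^sup>1\<close> gives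
  \<open>f(t) = t \<integral>\<^sub>0\<^sup>1 exp (-t x ln x) dx\<close>. For \<open>s = -t \<rightarrow> \<infinity>\<close> the integral
  \<open>\<integral>\<^sub>0\<^sup>1 exp (s x ln x) dx\<close> concentrates near \<open>x = 1\<close>, where \<open>x ln x \<approx> x - 1\<close>;
  comparing with \<open>\<integral>\<^sub>0\<^sup>1 exp (s (x - 1)) dx \<approx> 1/s\<close> from both sides shows
  \<open>s \<integral>\<^sub>0\<^sup>1 exp (s x ln x) dx \<rightarrow> 1\<close>, i.e. \<open>f(t) \<rightarrow> -1\<close>.
\<close>

lemma x_ln_x_nonpos:
  fixes x :: real
  assumes "0 \<le> x" "x \<le> 1"
  shows "x * ln x \<le> 0"
  using assms by (cases "x = 0") (auto intro: mult_nonneg_nonpos)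

lemma x_minus_one_le_x_ln_x:
  fixes x :: real
  assumes "0 \<le> x"
  shows "x - 1 \<le> x * ln x"
proof (cases "x = 0")
  case False
  with assms have "x > 0" by simp
  have "ln (1 / x) \<le> 1 / x - 1"
    using \<open>x > 0\<close> by (intro ln_le_minus_one) simp
  then have "x * (1 - 1 / x) \<le> x * ln x"
    using \<open>x > 0\<close> by (intro mult_left_mono) (auto simp: ln_div)
  with \<open>x > 0\<close> show ?thesis by (simp add: algebra_simps)
qed simp

lemma x_ln_x_piecewise_bound:
  fixes c d x :: real
  assumes "0 < d" "d \<le> c" "c < 1" "0 \<le> x" "x \<le> 1"
  shows "x * ln x \<le> x * ln d \<or> x * ln x \<le> d * ln c \<or> x * ln x \<le> c * (x - 1)"
proof -
  consider "x \<le> d" | "d \<le> x" "x \<le> c" | "c \<le> x" by linarith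
  then show ?thesis
  proof cases
    case 1
    have "x * ln x \<le> x * ln d"
      using 1 assms by (cases "x = 0") (auto intro: mult_left_mono)
    then show ?thesis ..
  next
    case 2
    then have "x * ln x \<le> x * ln c"
      using assms by (intro mult_left_mono) auto
    also have "\<dots> \<le> d * ln c"
      using 2 assms by (intro mult_right_mono_neg) auto
    finally show ?thesis by simp
  next
    case 3
    then have "x * ln x \<le> c * ln x"
      using assms by (intro mult_right_mono_neg) auto
    also have "\<dots> \<le> c * (x - 1)"
      using 3 assms by (intro mult_left_mono ln_le_minus_one) auto
    finally show ?thesis by simp
  qed
qed

lemma continuous_on_x_ln_x: "continuous_on {0..} (\<lambda>x::real. x * ln x)"
  unfolding continuous_on_eq_continuous_within
proof
  fix x :: real
  assume "x \<in> {0..}"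
  show "continuous (at x within {0..}) (\<lambda>x. x * ln x)"
  proof (cases "x = 0")
    case True
    have "((\<lambda>x::real. x * ln x) \<longlongrightarrow> 0) (at_right 0)" by real_asymp
    with True show ?thesis
      by (simp add: continuous_within at_within_Ici_at_right)
  next
    case False
    with \<open>x \<in> {0..}\<close> have "isCont (\<lambda>x. x * ln x) x"
      by (auto intro!: continuous_intros)
    then show ?thesis
      by (rule continuous_at_imp_continuous_at_within)
  qed
qed

lemma continuous_on_power_mult_ln_power:
  assumes "k \<le> m"
  shows "continuous_on {0..} (\<lambda>x::real. x ^ m * ln x ^ k)"
proof -
  have "x ^ m * ln x ^ k = (x * ln x) ^ k * x ^ (m - k)" for x :: real
    using assms by (simp add: power_mult_distrib flip: power_add)
  then show ?thesis
    by (simp only:) (intro continuous_intros continuous_on_x_ln_x)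
qed

lemma has_integral_power_mult_ln_power:
  assumes "k \<le> m"
  shows "((\<lambda>x::real. x ^ m * ln x ^ k) has_integral (-1) ^ k * fact k / real (Suc m) ^ Suc k) {0..1}"
  using assms
proof (induction k)
  case 0
  have "((\<lambda>x. x ^ Suc m / real (Suc m)) has_real_derivative x ^ m) (at x within {0..1})" for x :: real
    using DERIV_cdivide[OF DERIV_pow[of "Suc m" x], of "real (Suc m)"]
    by (auto simp del: of_nat_Suc intro: has_field_derivative_at_within)
  then have "((\<lambda>x::real. x ^ m) has_integral 1 ^ Suc m / real (Suc m) - 0 ^ Suc m / real (Suc m)) {0..1}"
    by (intro fundamental_theorem_of_calculus)
       (auto simp flip: has_real_derivative_iff_has_vector_derivative)
  then show ?case by simp
next
  case (Suc j)
  let ?G = "\<lambda>x::real. x ^ Suc m * ln x ^ Suc j"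
  let ?dG = "\<lambda>x::real. real (Suc m) * (x ^ m * ln x ^ Suc j) + real (Suc j) * (x ^ m * ln x ^ j)"
  \<comment> \<open>integration by parts: the boundary term \<open>?G 1 - ?G 0\<close> vanishes\<close>
  have "(?dG has_integral ?G 1 - ?G 0) {0..1}"
  proof (rule fundamental_theorem_of_calculus_interior)
    show "continuous_on {0..1} ?G"
      using continuous_on_power_mult_ln_power[of "Suc j" "Suc m"] Suc.prems
      by (auto intro: continuous_on_subset)
    fix x :: real
    assume "x \<in> {0<..<1}"
    then have "(?G has_real_derivative ?dG x) (at x)"
      by (intro DERIV_cong[OF DERIV_mult[OF DERIV_pow DERIV_power_Suc[OF DERIV_ln]]])
         (auto simp: field_simps)
    then show "(?G has_vector_derivative ?dG x) (at x)"
      by (simp add: has_real_derivative_iff_has_vector_derivative)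
  qed simp
  then have "((\<lambda>x. ?dG x - real (Suc j) * (x ^ m * ln x ^ j)) has_integral
      0 - real (Suc j) * ((-1) ^ j * fact j / real (Suc m) ^ Suc j)) {0..1}"
    using Suc by (intro has_integral_diff has_integral_mult_right) auto
  then have "((\<lambda>x. real (Suc m) * (x ^ m * ln x ^ Suc j)) has_integral
      - (real (Suc j) * ((-1) ^ j * fact j / real (Suc m) ^ Suc j))) {0..1}"
    by (simp only: add_diff_cancel_right' diff_0)
  then have "((\<lambda>x. x ^ m * ln x ^ Suc j) has_integral
      - (real (Suc j) * ((-1) ^ j * fact j / real (Suc m) ^ Suc j)) / real (Suc m)) {0..1}"
    by (subst (asm) has_integral_mult_right_iff) simp_all
  moreover have "- (real (Suc j) * ((-1) ^ j * fact j / real (Suc m) ^ Suc j)) / real (Suc m)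
      = (-1) ^ Suc j * fact (Suc j) / real (Suc m) ^ Suc (Suc j)"
    by (simp add: field_simps) (simp add: minus_divide_left)
  ultimately show ?case
    by (simp only:)
qed

lemma has_integral_exp_affine:
  fixes a b u v :: real
  assumes "a \<noteq> 0" "u \<le> v"
  shows "((\<lambda>x. exp (a * x + b)) has_integral (exp (a * v + b) - exp (a * u + b)) / a) {u..v}"
  using assms
  by (auto simp: diff_divide_distrib intro!: fundamental_theorem_of_calculus derivative_eq_intros
           simp flip: has_real_derivative_iff_has_vector_derivative)

lemma abs_exp_partial_sum_le:
  fixes y :: real
  shows "\<bar>\<Sum>n<N. y ^ n / fact n\<bar> \<le> exp \<bar>y\<bar>"
proof -
  have "\<bar>\<Sum>n<N. y ^ n / fact n\<bar> \<le> (\<Sum>n<N. \<bar>y\<bar> ^ n / fact n)"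
    by (rule order_trans[OF sum_abs]) (simp add: power_abs)
  also have "\<dots> \<le> (\<Sum>n. \<bar>y\<bar> ^ n / fact n)"
    using summable_exp[of "\<bar>y\<bar>"] by (intro sum_le_suminf) (auto simp: divide_inverse_commute)
  also have "\<dots> = exp \<bar>y\<bar>"
    by (simp add: exp_def divide_inverse_commute)
  finally show ?thesis .
qed

text \<open>\<open>sophomore_integral s = \<integral>\<^sub>0\<^sup>1 x\<^sup>s\<^sup>x dx\<close>; as \<open>ln 0 = 0\<close>, the integrand takes
  its limit value \<open>1\<close> at \<open>x = 0\<close>.\<close>
definition sophomore_integral :: "real \<Rightarrow> real" where
  "sophomore_integral s = integral {0..1} (\<lambda>x. exp (s * (x * ln x)))"

lemma has_integral_sophomore_integral:
  "((\<lambda>x. exp (s * (x * ln x))) has_integral sophomore_integral s) {0..1}"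
proof -
  have "continuous_on {0..1} (\<lambda>x::real. exp (s * (x * ln x)))"
    using continuous_on_subset[OF continuous_on_x_ln_x, of "{0..1}"]
    by (auto intro!: continuous_intros)
  then show ?thesis
    unfolding sophomore_integral_def by (intro integrable_integral integrable_continuous_interval)
qed

lemma sums_sophomore_integral:
  "(\<lambda>n. (-s) ^ n / real (Suc n) ^ Suc n) sums sophomore_integral s"
proof -
  define P where "P N x = (\<Sum>n<N. (s * (x * ln x)) ^ n / fact n)" for N x
  have "((\<lambda>x. s ^ n / fact n * (x ^ n * ln x ^ n)) has_integral
      s ^ n / fact n * ((-1) ^ n * fact n / real (Suc n) ^ Suc n)) {0..1}" for n
    by (intro has_integral_mult_right has_integral_power_mult_ln_power) simp
  then have "((\<lambda>x. (s * (x * ln x)) ^ n / fact n) has_integral (-s) ^ n / real (Suc n) ^ Suc n) {0..1}" for n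
    by (simp add: power_mult_distrib power_minus' mult_ac)
  then have P_integral: "(P N has_integral (\<Sum>n<N. (-s) ^ n / real (Suc n) ^ Suc n)) {0..1}" for N
    unfolding P_def by (intro has_integral_sum) auto
  have P_lim: "(\<lambda>N. P N x) \<longlonglongrightarrow> exp (s * (x * ln x))" for x
    using exp_converges[of "s * (x * ln x)"]
    unfolding P_def sums_def by (simp add: divide_inverse_commute)
  have P_bound: "\<bar>P N x\<bar> \<le> exp \<bar>s\<bar>" if "x \<in> {0..1}" for N x
  proof -
    have "\<bar>x * ln x\<bar> \<le> 1"
      using that x_ln_x_nonpos[of x] x_minus_one_le_x_ln_x[of x] by auto
    then have "\<bar>s * (x * ln x)\<bar> \<le> \<bar>s\<bar>"
      by (simp add: abs_mult mult_left_le)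
    then show ?thesis
      using abs_exp_partial_sum_le[of "s * (x * ln x)" N] unfolding P_def
      by (meson exp_le_cancel_iff order_trans)
  qed
  have "(\<lambda>N. integral {0..1} (P N)) \<longlonglongrightarrow> sophomore_integral s"
    unfolding sophomore_integral_def
    by (rule dominated_convergence(2)[where h = "\<lambda>_. exp \<bar>s\<bar>"])
       (use P_integral P_bound P_lim in \<open>auto simp: integrable_on_def\<close>)
  moreover have "integral {0..1} (P N) = (\<Sum>n<N. (-s) ^ n / real (Suc n) ^ Suc n)" for N
    using P_integral by (rule integral_unique)
  ultimately show ?thesis
    unfolding sums_def by simp
qed

lemma f_series_eq: "f_series t = t * sophomore_integral (- t)"
proof -
  have "(\<lambda>n. t * (t ^ n / real (Suc n) ^ Suc n)) sums (t * sophomore_integral (- t))"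
    using sums_mult[OF sums_sophomore_integral[of "- t"]] by simp
  then show ?thesis
    unfolding f_series_def by (simp add: sums_iff)
qed

lemma sophomore_integral_lower:
  assumes "s > 0"
  shows "1 - exp (- s) \<le> s * sophomore_integral s"
proof -
  have "(exp (s * 1 + - s) - exp (s * 0 + - s)) / s \<le> sophomore_integral s"
  proof (rule has_integral_le[OF has_integral_exp_affine has_integral_sophomore_integral])
    fix x :: real
    assume "x \<in> {0..1}"
    then have "s * (x - 1) \<le> s * (x * ln x)"
      using assms x_minus_one_le_x_ln_x[of x] by (intro mult_left_mono) auto
    then show "exp (s * x + - s) \<le> exp (s * (x * ln x))"
      by (simp add: algebra_simps)
  qed (use assms in auto)
  with assms show ?thesis by (simp add: field_simps)
qed

lemma sophomore_integral_upper:
  assumes "s > 0" "0 < d" "d \<le> c" "c < 1"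
  shows "s * sophomore_integral s
    \<le> (1 - exp (s * ln d)) / - ln d + s * exp (s * d * ln c) + (1 - exp (- (s * c))) / c"
proof -
  have "ln d < 0" "c > 0" using assms by auto
  let ?bound = "\<lambda>x. exp (s * ln d * x + 0) + exp (s * d * ln c) + exp (s * c * x + - (s * c))"
  have "(?bound has_integral
      (exp (s * ln d) - 1) / (s * ln d) + exp (s * d * ln c) + (1 - exp (- (s * c))) / (s * c)) {0..1}"
    using has_integral_add[OF has_integral_add
        [OF has_integral_exp_affine[of "s * ln d" 0 1 0] has_integral_const_real[of "exp (s * d * ln c)" 0 1]]
        has_integral_exp_affine[of "s * c" 0 1 "- (s * c)"]]
      assms \<open>ln d < 0\<close>
    by simp
  then have "sophomore_integral s
      \<le> (exp (s * ln d) - 1) / (s * ln d) + exp (s * d * ln c) + (1 - exp (- (s * c))) / (s * c)"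
  proof (rule has_integral_le[OF has_integral_sophomore_integral])
    fix x :: real
    assume "x \<in> {0..1}"
    then have "s * (x * ln x) \<le> s * (x * ln d) \<or> s * (x * ln x) \<le> s * (d * ln c)
        \<or> s * (x * ln x) \<le> s * (c * (x - 1))"
      using x_ln_x_piecewise_bound[OF assms(2-4), of x] \<open>s > 0\<close>
      by (auto simp: mult_le_cancel_left_pos)
    then consider "exp (s * (x * ln x)) \<le> exp (s * ln d * x + 0)"
      | "exp (s * (x * ln x)) \<le> exp (s * d * ln c)"
      | "exp (s * (x * ln x)) \<le> exp (s * c * x + - (s * c))"
      by (auto simp: algebra_simps)
    then show "exp (s * (x * ln x)) \<le> ?bound x"
      using exp_gt_zero[of "s * ln d * x + 0"] exp_gt_zero[of "s * d * ln c"]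
        exp_gt_zero[of "s * c * x + - (s * c)"]
      by cases linarith+
  qed
  then have "s * sophomore_integral s \<le> s * ((exp (s * ln d) - 1) / (s * ln d) + exp (s * d * ln c)
      + (1 - exp (- (s * c))) / (s * c))"
    using \<open>s > 0\<close> by simp
  also have "\<dots> = (1 - exp (s * ln d)) / - ln d + s * exp (s * d * ln c) + (1 - exp (- (s * c))) / c"
    using \<open>s > 0\<close> \<open>c > 0\<close> \<open>ln d < 0\<close> by (simp add: field_simps)
  finally show ?thesis .
qed

text \<open>The upper bound tends to \<open>1\<close> when \<open>d \<rightarrow> 0\<close>, \<open>c \<rightarrow> 1\<close> and
  \<open>s d (1 - c) \<gg> ln s\<close>, which \<open>d = s\<^sup>-\<^sup>1\<^sup>/\<^sup>2\<close>, \<open>c = 1 - s\<^sup>-\<^sup>1\<^sup>/\<^sup>4\<close> achieve.\<close>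
lemma tendsto_mult_sophomore_integral: "((\<lambda>s. s * sophomore_integral s) \<longlongrightarrow> 1) at_top"
proof -
  define d c :: "real \<Rightarrow> real" where "d s = s powr (-1/2)" and "c s = 1 - s powr (-1/4)" for s
  define U where "U s = (1 - exp (s * ln (d s))) / - ln (d s) + s * exp (s * d s * ln (c s))
      + (1 - exp (- (s * c s))) / c s" for s
  have "eventually (\<lambda>s. 0 < s \<and> 0 < d s \<and> d s \<le> c s \<and> c s < 1) at_top"
    unfolding d_def c_def by (intro eventually_conj; real_asymp)
  then have upper: "eventually (\<lambda>s. s * sophomore_integral s \<le> U s) at_top"
    unfolding U_def by eventually_elim (intro sophomore_integral_upper; auto)
  have lower: "eventually (\<lambda>s. 1 - exp (- s) \<le> s * sophomore_integral s) at_top"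
    using eventually_gt_at_top[of 0] by eventually_elim (rule sophomore_integral_lower)
  have "((\<lambda>s::real. 1 - exp (- s)) \<longlongrightarrow> 1) at_top" "(U \<longlongrightarrow> 1) at_top"
    unfolding U_def d_def c_def by real_asymp+
  with lower upper show ?thesis
    by (rule tendsto_sandwich)
qed

theorem mainTheorem8:
  shows "(f_series \<longlongrightarrow> -1) at_bot"
proof -
  have "((\<lambda>s. - (s * sophomore_integral s)) \<longlongrightarrow> -1) at_top"
    by (intro tendsto_minus tendsto_mult_sophomore_integral)
  then show ?thesis
    unfolding filterlim_at_bot_mirror f_series_eq by simp
qed

end
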